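(* Fix $1\le i\le h$ and let $\hat F_i\subseteq B_i$ satisfy $\sum_{e\in\hat F_i}\gamma_i(e)\le\Delta$ and be such that $(V(T_i),\hat F_i)$ is a forest of stars. Let $F_i=\{e_{j,q}:\bar e_{j,q}\in\hat F_i\}$. Then $r(F_i)\ge r(\hat F_i)$, where $r(F_i)$ is computed in the original instance (red tree $T$, costs $c$) and $r(\hat F_i)$ in the auxiliary instance (red star $T_i$, costs $c_i$).
   Context: $\mathsf{StackMST}(\gamma,\Delta)$: given a tree $T=(V,E(T))$ with red edge costs $c(e)\ge0$, activation costs $\gamma(e)\ge0$ for every pair $e\notin E(T)$ of vertices, and a budget $\Delta$, the leader selects a set $F$ of such pairs with $\sum_{e\in F}\gamma(e)\le\Delta$ and prices $p:F\to\mathbb{R}^+$; the follower computes a minimum spanning tree of $(V,E(T)\cup F)$ breaking ties in favor of the leader, whose revenue is the total price of selected edges of $F$. For a red tree (or multigraph red star) with costs $c'$ and a set $F$ of added edges, define for $e\in F$: $p_F(e)=\min_{H}\max_{e'\in E(H)\text{ red}}c'(e')$, the minimum over all simple cycles $H$ containing $e$ in the (multi)graph formed by the red edges and $F$; $r(F)$ is the revenue the leader obtains by activating $F$ with prices $p_F$. Root $T$ at its center $v_0$; $h$ is its height. For $1\le i\le h$, let $V_i=\{v_1,\dots,v_{\ell_i}\}$ be the vertices at depth $i$ and $E_i$ the edges joining them to their parents. $T_i$ is the star centered at $v_0$ with leaves $v_1,\dots,v_{\ell_i}$, with $c_i(v_0,v)=c(u,v)$ where $u$ is the parent of $v$ in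 $T$. Let $\hat T_0,\dots,\hat T_{\ell_i}$ be the components of $T-E_i$ with $v_0\in\hat T_0$, $v_j\in\hat T_j$. For $j\ne q$ in $\{0,\dots,\ell_i\}$, $e_{j,q}$ is a (fixed) pair not in $E(T)$ joining $\hat T_j$ and $\hat T_q$ of minimum activation cost; $\bar e_{j,q}=(v_j,v_q)$ with $\gamma_i(\bar e_{j,q})=\gamma(e_{j,q})$, and $B_i=\{\bar e_{j,q}\}$ is the set of edges the leader may activate in the auxiliary instance with red star $T_i$ (edges $\bar e_{0,q}$ are parallel to red edges). *)

theory Defs
  imports Complex_Main
begin

definition is_path :: "('e \<Rightarrow> 'v set) \<Rightarrow> 'e set \<Rightarrow> 'v \<Rightarrow> 'v \<Rightarrow> 'e list \<Rightarrow> 'v list \<Rightarrow> bool" where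
  "is_path ends A u v es vs \<longleftrightarrow>
     length vs = Suc (length es) \<and> distinct vs \<and> distinct es \<and> set es \<subseteq> A \<and>
     hd vs = u \<and> last vs = v \<and> (\<forall>k<length es. ends (es ! k) = {vs ! k, vs ! Suc k})"

definition reach :: "('e \<Rightarrow> 'v set) \<Rightarrow> 'e set \<Rightarrow> 'v \<Rightarrow> 'v \<Rightarrow> bool" where
  "reach ends A u v \<longleftrightarrow> (\<exists>es vs. is_path ends A u v es vs)"

text \<open>Simple cycle (in a multigraph: two parallel edges form a cycle of length 2).\<close>
definition simple_cycle :: "('e \<Rightarrow> 'v set) \<Rightarrow> 'e set \<Rightarrow> 'e list \<Rightarrow> bool" where
  "simple_cycle ends A es \<longleftrightarrow>
     2 \<le> length es \<and> distinct es \<and> set es \<subseteq> A \<and>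
     (\<exists>vs. length vs = length es \<and> distinct vs \<and>
        (\<forall>k<length es. ends (es ! k) = {vs ! k, vs ! (Suc k mod length es)}))"

definition edge_acyclic :: "('e \<Rightarrow> 'v set) \<Rightarrow> 'e set \<Rightarrow> bool" where
  "edge_acyclic ends A \<longleftrightarrow> \<not> (\<exists>es. simple_cycle ends A es)"

definition connected_on :: "('e \<Rightarrow> 'v set) \<Rightarrow> 'v set \<Rightarrow> 'e set \<Rightarrow> bool" where
  "connected_on ends V A \<longleftrightarrow> (\<forall>u\<in>V. \<forall>v\<in>V. reach ends A u v)"

definition spanning_tree :: "('e \<Rightarrow> 'v set) \<Rightarrow> 'v set \<Rightarrow> 'e set \<Rightarrow> 'e set \<Rightarrow> bool" where
  "spanning_tree ends V A S \<longleftrightarrow> S \<subseteq> A \<and> connected_on ends V S \<and> edge_acyclic ends S"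

definition forest_of_stars :: "('e \<Rightarrow> 'v set) \<Rightarrow> 'v set \<Rightarrow> 'e set \<Rightarrow> bool" where
  "forest_of_stars ends W A \<longleftrightarrow> (\<forall>e\<in>A. ends e \<subseteq> W) \<and> edge_acyclic ends A \<and>
     (\<forall>u\<in>W. \<exists>z. \<forall>e\<in>A. ends e \<subseteq> {x\<in>W. reach ends A u x} \<longrightarrow> z \<in> ends e)"

text \<open>Maximum red cost on a cycle (0 if the cycle has no red edge; this case does not arise
  for the acyclic sets F considered here).\<close>
definition red_max :: "('e \<Rightarrow> real) \<Rightarrow> 'e set \<Rightarrow> 'e list \<Rightarrow> real" where
  "red_max c R es = (if set es \<inter> R = {} then 0 else Max (c ` (set es \<inter> R)))"

definition price :: "('e \<Rightarrow> 'v set) \<Rightarrow> 'e set \<Rightarrow> ('e \<Rightarrow> real) \<Rightarrow> 'e set \<Rightarrow> 'e \<Rightarrow> real" where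
  "price ends R c F e = Min {red_max c R es | es. simple_cycle ends (R \<union> F) es \<and> e \<in> set es}"

definition follower_weight :: "('e \<Rightarrow> 'v set) \<Rightarrow> 'e set \<Rightarrow> ('e \<Rightarrow> real) \<Rightarrow> 'e set \<Rightarrow> 'e \<Rightarrow> real" where
  "follower_weight ends R c F e = (if e \<in> R then c e else price ends R c F e)"

definition is_mst :: "('e \<Rightarrow> 'v set) \<Rightarrow> 'v set \<Rightarrow> 'e set \<Rightarrow> ('e \<Rightarrow> real) \<Rightarrow> 'e set \<Rightarrow> 'e set \<Rightarrow> bool" where
  "is_mst ends V R c F S \<longleftrightarrow> spanning_tree ends V (R \<union> F) S \<and>
     (\<forall>S'. spanning_tree ends V (R \<union> F) S' \<longrightarrow>
        sum (follower_weight ends R c F) S \<le> sum (follower_weight ends R c F) S')"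

text \<open>Revenue: the follower picks an MST, ties broken in favour of the leader.\<close>
definition revenue :: "('e \<Rightarrow> 'v set) \<Rightarrow> 'v set \<Rightarrow> 'e set \<Rightarrow> ('e \<Rightarrow> real) \<Rightarrow> 'e set \<Rightarrow> real" where
  "revenue ends V R c F = Max {sum (price ends R c F) (S \<inter> F) | S. is_mst ends V R c F S}"

definition is_tree :: "'v set \<Rightarrow> 'v set set \<Rightarrow> bool" where
  "is_tree V ET \<longleftrightarrow> finite V \<and> (\<forall>e\<in>ET. \<exists>x y. x \<in> V \<and> y \<in> V \<and> x \<noteq> y \<and> e = {x, y}) \<and>
     spanning_tree id V ET ET"

definition tdist :: "'v set set \<Rightarrow> 'v \<Rightarrow> 'v \<Rightarrow> nat" where
  "tdist ET u v = (LEAST n. \<exists>es vs. is_path id ET u v es vs \<and> length es = n)"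

definition ecc :: "'v set \<Rightarrow> 'v set set \<Rightarrow> 'v \<Rightarrow> nat" where
  "ecc V ET v = Max (tdist ET v ` V)"

definition is_center :: "'v set \<Rightarrow> 'v set set \<Rightarrow> 'v \<Rightarrow> bool" where
  "is_center V ET v0 \<longleftrightarrow> v0 \<in> V \<and> (\<forall>u\<in>V. ecc V ET v0 \<le> ecc V ET u)"

definition height :: "'v set \<Rightarrow> 'v set set \<Rightarrow> 'v \<Rightarrow> nat" where
  "height V ET v0 = Max (tdist ET v0 ` V)"

definition parent :: "'v set set \<Rightarrow> 'v \<Rightarrow> 'v \<Rightarrow> 'v" where
  "parent ET v0 v = (THE u. {u, v} \<in> ET \<and> Suc (tdist ET v0 u) = tdist ET v0 v)"

definition level :: "'v set \<Rightarrow> 'v set set \<Rightarrow> 'v \<Rightarrow> nat \<Rightarrow> 'v set" where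
  "level V ET v0 i = {v \<in> V. tdist ET v0 v = i}"

definition level_edges :: "'v set \<Rightarrow> 'v set set \<Rightarrow> 'v \<Rightarrow> nat \<Rightarrow> 'v set set" where
  "level_edges V ET v0 i = (\<lambda>v. {parent ET v0 v, v}) ` level V ET v0 i"

definition comp :: "'v set \<Rightarrow> 'v set set \<Rightarrow> 'v \<Rightarrow> nat \<Rightarrow> 'v \<Rightarrow> 'v set" where
  "comp V ET v0 i j = {x \<in> V. reach id (ET - level_edges V ET v0 i) j x}"

definition cand :: "'v set \<Rightarrow> 'v set set \<Rightarrow> 'v \<Rightarrow> nat \<Rightarrow> 'v set \<Rightarrow> 'v set set" where
  "cand V ET v0 i p = {{x, y} | x y j q. p = {j, q} \<and> x \<in> comp V ET v0 i j \<and>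
       y \<in> comp V ET v0 i q \<and> {x, y} \<notin> ET}"

definition star_vertices :: "'v set \<Rightarrow> 'v set set \<Rightarrow> 'v \<Rightarrow> nat \<Rightarrow> 'v set" where
  "star_vertices V ET v0 i = insert v0 (level V ET v0 i)"

text \<open>B_i, as pairs {v_j, v_q} (only those for which some e_{j,q} exists).\<close>
definition aux_pairs :: "'v set \<Rightarrow> 'v set set \<Rightarrow> 'v \<Rightarrow> nat \<Rightarrow> 'v set set" where
  "aux_pairs V ET v0 i = {{j, q} | j q. j \<in> star_vertices V ET v0 i \<and> q \<in> star_vertices V ET v0 i \<and>
      j \<noteq> q \<and> cand V ET v0 i {j, q} \<noteq> {}}"

text \<open>Auxiliary multigraph: edge Inl v is the red star edge (v0,v) for v in V_i,
  edge Inr {j,q} is the blue edge \<bar>e_{j,q}.\<close>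
definition aux_ends :: "'v \<Rightarrow> 'v + 'v set \<Rightarrow> 'v set" where
  "aux_ends v0 = case_sum (\<lambda>v. {v0, v}) id"

definition aux_cost :: "'v set set \<Rightarrow> 'v \<Rightarrow> ('v set \<Rightarrow> real) \<Rightarrow> 'v + 'v set \<Rightarrow> real" where
  "aux_cost ET v0 c = case_sum (\<lambda>v. c {parent ET v0 v, v}) (\<lambda>_. 0)"

end

theory Submission
  imports Defs
begin

text \<open>Each leader edge \<open>e\<^sub>j\<^sub>,\<^sub>q\<close> joins the components \<open>T\<^sub>j\<close> and \<open>T\<^sub>q\<close> of \<open>T - E\<^sub>i\<close>. Contracting
  every component to its vertex \<open>v\<^sub>j\<close> turns a cycle of \<open>T + F\<^sub>i\<close> through \<open>e\<^sub>j\<^sub>,\<^sub>q\<close> into a cycle of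
  the auxiliary multigraph (red star \<open>T\<^sub>i\<close> plus the edges of \<open>hatP\<close>) through the corresponding
  auxiliary edge, whose red edges are edges of \<open>E\<^sub>i\<close> with the same costs; so every auxiliary
  price is at most the corresponding original price. Contraction also shows that \<open>F\<^sub>i\<close> is acyclic.
  As ties are broken in favour of the leader, some minimum spanning tree then contains all of
  \<open>F\<^sub>i\<close>, so \<open>r(F\<^sub>i)\<close> is at least the total original price, while the auxiliary revenue is at
  most the total auxiliary price because prices are nonnegative.\<close>

section \<open>Paths, cycles and spanning trees\<close>

definition adj :: "('e \<Rightarrow> 'v set) \<Rightarrow> 'e set \<Rightarrow> ('v \<times> 'v) set" where
  "adj ends A = {(x, y). \<exists>e\<in>A. ends e = {x, y}}"

lemma adjI: "e \<in> A \<Longrightarrow> ends e = {x, y} \<Longrightarrow> (x, y) \<in> adj ends A"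
  unfolding adj_def by blast

lemma sym_adj: "sym (adj ends A)"
  unfolding adj_def sym_def by (auto simp: insert_commute)

lemma adj_mono: "A \<subseteq> B \<Longrightarrow> adj ends A \<subseteq> adj ends B"
  unfolding adj_def by blast

lemma adj_rtrancl_sym: "(x, y) \<in> (adj ends A)\<^sup>* \<Longrightarrow> (y, x) \<in> (adj ends A)\<^sup>*"
  by (meson sym_rtrancl[OF sym_adj] symD)

lemma adj_rtrancl_mono: "(x, y) \<in> (adj ends A)\<^sup>* \<Longrightarrow> A \<subseteq> B \<Longrightarrow> (x, y) \<in> (adj ends B)\<^sup>*"
  by (meson adj_mono rtrancl_mono subsetD)

lemma is_path_endpoints:
  assumes "is_path ends A u v es vs"
  shows "vs ! 0 = u" "vs ! length es = v"
proof -
  have l: "length vs = Suc (length es)" "hd vs = u" "last vs = v"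
    using assms unfolding is_path_def by blast+
  then have "vs \<noteq> []" by auto
  with l show "vs ! 0 = u" "vs ! length es = v"
    by (simp_all add: hd_conv_nth last_conv_nth)
qed

lemma is_path_prefix:
  assumes "is_path ends A u v es vs" "k \<le> length es"
  shows "is_path ends A u (vs ! k) (take k es) (take (Suc k) vs)"
proof -
  have lv: "length vs = Suc (length es)" using assms unfolding is_path_def by blast
  then have tk: "take (Suc k) vs = take k vs @ [vs ! k]" using assms(2)
    by (simp add: take_Suc_conv_app_nth)
  have "last (take (Suc k) vs) = vs ! k" by (simp add: tk)
  moreover have "hd (take (Suc k) vs) = hd vs" by simp
  ultimately show ?thesis using assms lv unfolding is_path_def
    by (auto simp: min_def dest: in_set_takeD)
qed

lemma is_path_snoc:
  assumes P: "is_path ends A u v es vs" and e: "e \<in> A" "ends e = {v, w}"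
  shows "\<exists>es' vs'. is_path ends A u w es' vs' \<and> length es' \<le> Suc (length es)"
proof (cases "w \<in> set vs")
  case True
  then obtain k where k: "k < length vs" "vs ! k = w" by (auto simp: in_set_conv_nth)
  then have "k \<le> length es" using P unfolding is_path_def by simp
  with is_path_prefix[OF P this] k show ?thesis by fastforce
next
  case False
  have lv: "length vs = Suc (length es)"
    and ends: "\<forall>k<length es. ends (es ! k) = {vs ! k, vs ! Suc k}"
    using P unfolding is_path_def by blast+
  have "e \<notin> set es"
  proof
    assume "e \<in> set es"
    then obtain m where "m < length es" "es ! m = e" by (auto simp: in_set_conv_nth)
    with ends e have "w \<in> {vs ! m, vs ! Suc m}" by auto
    with \<open>m < length es\<close> lv False show False by auto
  qed
  moreover have "ends ((es @ [e]) ! k) = {(vs @ [w]) ! k, (vs @ [w]) ! Suc k}"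
    if "k < Suc (length es)" for k
    using that ends e is_path_endpoints(2)[OF P] lv
    by (cases "k = length es") (auto simp: nth_append)
  moreover have "vs \<noteq> []" using lv by auto
  ultimately have "is_path ends A u w (es @ [e]) (vs @ [w])"
    using P False e lv unfolding is_path_def by auto
  then show ?thesis by fastforce
qed

lemma is_path_segment:
  assumes P: "is_path ends A u v es vs" and "n \<le> length es" "m \<le> n"
  shows "(vs ! m, vs ! n) \<in> (adj ends {es ! l | l. m \<le> l \<and> l < n})\<^sup>*"
  using assms(2,3)
proof (induction n)
  case (Suc n)
  show ?case
  proof (cases "m = Suc n")
    case False
    then have "(vs ! m, vs ! n) \<in> (adj ends {es ! l | l. m \<le> l \<and> l < n})\<^sup>*"
      using Suc by simp
    then have "(vs ! m, vs ! n) \<in> (adj ends {es ! l | l. m \<le> l \<and> l < Suc n})\<^sup>*"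
      by (rule adj_rtrancl_mono) auto
    moreover have "(vs ! n, vs ! Suc n) \<in> adj ends {es ! l | l. m \<le> l \<and> l < Suc n}"
      using P Suc.prems False unfolding is_path_def by (intro adjI[of "es ! n"]) auto
    ultimately show ?thesis by simp
  qed simp
qed simp

lemma reach_iff_rtrancl: "reach ends A u v \<longleftrightarrow> (u, v) \<in> (adj ends A)\<^sup>*"
proof
  assume "reach ends A u v"
  then obtain es vs where P: "is_path ends A u v es vs" unfolding reach_def by blast
  have "(vs ! 0, vs ! length es) \<in> (adj ends A)\<^sup>*"
    using is_path_segment[OF P order_refl le0]
    by (rule adj_rtrancl_mono) (use P in \<open>auto simp: is_path_def\<close>)
  then show "(u, v) \<in> (adj ends A)\<^sup>*" using is_path_endpoints[OF P] by simp
next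
  assume "(u, v) \<in> (adj ends A)\<^sup>*"
  then show "reach ends A u v"
  proof (induction rule: rtrancl_induct)
    case base
    have "is_path ends A u u [] [u]" unfolding is_path_def by simp
    then show ?case unfolding reach_def by blast
  next
    case (step y z)
    then obtain es vs where "is_path ends A u y es vs" unfolding reach_def by blast
    moreover obtain e where "e \<in> A" "ends e = {y, z}" using step(2) unfolding adj_def by blast
    ultimately show ?case unfolding reach_def using is_path_snoc by metis
  qed
qed

lemma rtrancl_adj_imp_path:
  "(u, v) \<in> (adj ends A)\<^sup>* \<Longrightarrow> \<exists>es vs. is_path ends A u v es vs"
  using reach_iff_rtrancl unfolding reach_def by metis

lemma is_path_edge_split:
  assumes P: "is_path ends A u v es vs" and g: "g \<in> set es"
  obtains a b where "ends g = {a, b}" "a \<noteq> b"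
    "(u, a) \<in> (adj ends (set es - {g}))\<^sup>*" "(b, v) \<in> (adj ends (set es - {g}))\<^sup>*"
proof -
  obtain k where k: "k < length es" "es ! k = g" using g by (auto simp: in_set_conv_nth)
  have "distinct es" "distinct vs" "length vs = Suc (length es)"
    and "ends g = {vs ! k, vs ! Suc k}" using P k unfolding is_path_def by auto
  then have "vs ! k \<noteq> vs ! Suc k" using k by (simp add: nth_eq_iff_index_eq)
  have sub: "{es ! l | l. m \<le> l \<and> l < n} \<subseteq> set es - {g}"
    if "n \<le> length es" "k < m \<or> n \<le> k" for m n
    using that k \<open>distinct es\<close> by (auto simp: nth_eq_iff_index_eq)
  have "(vs ! 0, vs ! k) \<in> (adj ends (set es - {g}))\<^sup>*"
    using is_path_segment[OF P, of k 0] sub[of k 0] k by (auto elim: adj_rtrancl_mono)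
  moreover have "(vs ! Suc k, vs ! length es) \<in> (adj ends (set es - {g}))\<^sup>*"
    using is_path_segment[OF P, of "length es" "Suc k"] sub[of "length es" "Suc k"] k
    by (auto elim: adj_rtrancl_mono)
  ultimately show thesis
    using that \<open>ends g = _\<close> \<open>vs ! k \<noteq> vs ! Suc k\<close> is_path_endpoints[OF P] by simp
qed

lemma simple_cycle_mono: "simple_cycle ends A es \<Longrightarrow> set es \<subseteq> B \<Longrightarrow> simple_cycle ends B es"
  unfolding simple_cycle_def by blast

lemma simple_cycle_of_path:
  assumes P: "is_path ends B b a es vs" and "B \<subseteq> A" "e \<in> A" "e \<notin> set es"
    and ends_e: "ends e = {a, b}" and "a \<noteq> b"
  shows "simple_cycle ends A (es @ [e])"
proof -
  have lv: "length vs = Suc (length es)" and dv: "distinct vs" and de: "distinct es"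
    and sB: "set es \<subseteq> B" and ends: "\<forall>k<length es. ends (es ! k) = {vs ! k, vs ! Suc k}"
    using P unfolding is_path_def by blast+
  have "vs ! 0 = b" "vs ! length es = a" using is_path_endpoints[OF P] by auto
  with \<open>a \<noteq> b\<close> have "es \<noteq> []" by auto
  then have "2 \<le> length (es @ [e])" by (cases es) auto
  moreover have "ends ((es @ [e]) ! k) = {vs ! k, vs ! (Suc k mod length (es @ [e]))}"
    if "k < length (es @ [e])" for k
    using that ends ends_e \<open>vs ! 0 = b\<close> \<open>vs ! length es = a\<close>
    by (cases "k = length es") (auto simp: nth_append)
  ultimately show ?thesis unfolding simple_cycle_def using assms lv dv de sB
    by (auto intro!: exI[of _ vs])
qed

lemma simple_cycle_close:
  assumes "(b, a) \<in> (adj ends B)\<^sup>*" "B \<subseteq> A" "e \<in> A" "e \<notin> B" "ends e = {a, b}" "a \<noteq> b"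
  shows "\<exists>C. simple_cycle ends A C \<and> e \<in> set C"
proof -
  obtain es vs where P: "is_path ends B b a es vs"
    using rtrancl_adj_imp_path[OF assms(1)] by blast
  then have "e \<notin> set es" using assms(4) unfolding is_path_def by blast
  with simple_cycle_of_path[OF P assms(2,3) _ assms(5,6)] show ?thesis by force
qed

lemma Suc_add_mod_neq: "k < n \<Longrightarrow> Suc m < n \<Longrightarrow> (Suc k + m) mod n \<noteq> k"
  by (cases "Suc k + m < n") (auto simp: le_mod_geq)

text \<open>Walking once around the cycle from the far end of \<open>e\<close> avoids \<open>e\<close>.\<close>
lemma simple_cycle_bypass:
  assumes C: "simple_cycle ends A es" and e: "e \<in> set es"
  obtains a b where "ends e = {a, b}" "(a, b) \<in> (adj ends (set es - {e}))\<^sup>*"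
proof -
  obtain vs where ends: "\<forall>k<length es. ends (es ! k) = {vs ! k, vs ! (Suc k mod length es)}"
    and de: "distinct es" and l2: "2 \<le> length es"
    using C unfolding simple_cycle_def by blast
  define n where "n = length es"
  obtain k where k: "k < n" "es ! k = e" using e unfolding n_def by (auto simp: in_set_conv_nth)
  have walk: "(vs ! (Suc k mod n), vs ! ((Suc k + m) mod n)) \<in> (adj ends (set es - {e}))\<^sup>*"
    if "m < n" for m
    using that
  proof (induction m)
    case (Suc m)
    define j where "j = (Suc k + m) mod n"
    have "j < n" using Suc.prems unfolding j_def by simp
    moreover have "j \<noteq> k" unfolding j_def using Suc_add_mod_neq[OF k(1) Suc.prems] .
    ultimately have "es ! j \<in> set es - {e}" using k de unfolding n_def by (auto simp: nth_eq_iff_index_eq)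
    moreover have "ends (es ! j) = {vs ! j, vs ! ((Suc k + Suc m) mod n)}"
      using ends \<open>j < n\<close> unfolding n_def j_def by (simp add: mod_Suc_eq)
    ultimately have "(vs ! j, vs ! ((Suc k + Suc m) mod n)) \<in> adj ends (set es - {e})"
      by (rule adjI)
    with Suc show ?case unfolding j_def by simp
  qed simp
  have "Suc k + (n - 1) = k + n" using l2 unfolding n_def by simp
  then have "(Suc k + (n - 1)) mod n = k" using k by simp
  then have "(vs ! (Suc k mod n), vs ! k) \<in> (adj ends (set es - {e}))\<^sup>*"
    using walk[of "n - 1"] l2 unfolding n_def by simp
  moreover have "ends e = {vs ! (Suc k mod n), vs ! k}" using ends k unfolding n_def by auto
  ultimately show thesis using that by blast
qed

lemma rtrancl_adj_isolated:
  assumes "(u, w) \<in> (adj ends B)\<^sup>*" "\<forall>e\<in>B. w \<notin> ends e"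
  shows "u = w"
  using assms(1)
proof (cases rule: rtranclE)
  case (step y)
  with assms(2) show ?thesis unfolding adj_def by blast
qed simp

lemma edge_acyclic_subset: "edge_acyclic ends S \<Longrightarrow> T \<subseteq> S \<Longrightarrow> edge_acyclic ends T"
  unfolding edge_acyclic_def by (meson simple_cycle_def simple_cycle_mono subset_trans)

lemma edge_acyclic_no_bypass:
  assumes "edge_acyclic ends S" "g \<in> S" "ends g = {a, b}" "a \<noteq> b"
  shows "(a, b) \<notin> (adj ends (S - {g}))\<^sup>*"
  using simple_cycle_close[of a b ends "S - {g}" S g] assms adj_rtrancl_sym
  unfolding edge_acyclic_def by blast

lemma edge_acyclic_insert:
  assumes "edge_acyclic ends S" "ends f = {x, y}" "(x, y) \<notin> (adj ends S)\<^sup>*"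
  shows "edge_acyclic ends (insert f S)"
  unfolding edge_acyclic_def
proof
  assume "\<exists>C. simple_cycle ends (insert f S) C"
  then obtain C where C: "simple_cycle ends (insert f S) C" by blast
  then have sC: "set C \<subseteq> insert f S" unfolding simple_cycle_def by blast
  show False
  proof (cases "f \<in> set C")
    case True
    then obtain a b where ab: "ends f = {a, b}" "(a, b) \<in> (adj ends (set C - {f}))\<^sup>*"
      by (rule simple_cycle_bypass[OF C])
    have "(a, b) \<in> (adj ends S)\<^sup>*" using ab(2) by (rule adj_rtrancl_mono) (use sC in blast)
    moreover have "{a, b} = {x, y}" using ab(1) assms(2) by simp
    ultimately have "(x, y) \<in> (adj ends S)\<^sup>*"
      using adj_rtrancl_sym by (auto simp: doubleton_eq_iff)
    with assms(3) show False by blast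
  next
    case False
    with sC C have "simple_cycle ends S C" by (auto intro: simple_cycle_mono)
    with assms(1) show False unfolding edge_acyclic_def by blast
  qed
qed

lemma connected_on_replace_edge:
  assumes con: "connected_on ends V S" and g: "g \<in> S" "ends g = {a, b}"
    and ab: "(a, b) \<in> (adj ends S')\<^sup>*" and sub: "S - {g} \<subseteq> S'"
  shows "connected_on ends V S'"
proof -
  have "adj ends S \<subseteq> (adj ends S')\<^sup>*"
  proof
    fix pq assume "pq \<in> adj ends S"
    then obtain p q h where pq: "pq = (p, q)" "h \<in> S" "ends h = {p, q}" unfolding adj_def by blast
    show "pq \<in> (adj ends S')\<^sup>*"
    proof (cases "h = g")
      case True
      then have "(p = a \<and> q = b) \<or> (p = b \<and> q = a)"
        using pq(3) g(2) by (auto simp: doubleton_eq_iff)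
      then show ?thesis using ab adj_rtrancl_sym[OF ab] pq(1) by blast
    next
      case False
      then have "h \<in> S'" using pq sub by blast
      then have "(p, q) \<in> adj ends S'" using pq(3) by (rule adjI)
      then show ?thesis using pq(1) by blast
    qed
  qed
  then have "(adj ends S)\<^sup>* \<subseteq> (adj ends S')\<^sup>*" by (rule rtrancl_subset_rtrancl)
  then show ?thesis using con unfolding connected_on_def reach_iff_rtrancl by blast
qed

lemma spanning_tree_exchange:
  assumes st: "spanning_tree ends V A S" and f: "f \<in> A" and ends_f: "ends f = {x, y}"
    and P: "is_path ends S x y es vs" and g: "g \<in> set es"
  shows "spanning_tree ends V A (insert f (S - {g}))"
proof -
  have "S \<subseteq> A" and con: "connected_on ends V S" and ac: "edge_acyclic ends S"
    using st unfolding spanning_tree_def by blast+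
  have "set es \<subseteq> S" using P unfolding is_path_def by blast
  then have "g \<in> S" and sub: "set es - {g} \<subseteq> S - {g}" using g by blast+
  obtain a b where ends_g: "ends g = {a, b}" and "a \<noteq> b"
    and xa: "(x, a) \<in> (adj ends (S - {g}))\<^sup>*" and by': "(b, y) \<in> (adj ends (S - {g}))\<^sup>*"
    using is_path_edge_split[OF P g] adj_rtrancl_mono[OF _ sub] by metis
  define S' where "S' = insert f (S - {g})"
  have "(x, y) \<in> adj ends S'" unfolding S'_def using ends_f by (intro adjI[of f]) simp_all
  moreover have "S - {g} \<subseteq> S'" unfolding S'_def by blast
  ultimately have "(a, b) \<in> (adj ends S')\<^sup>*"
    using adj_rtrancl_mono[OF adj_rtrancl_sym[OF xa]] adj_rtrancl_mono[OF adj_rtrancl_sym[OF by']]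
    by (meson r_into_rtrancl rtrancl_trans)
  then have "connected_on ends V S'"
    using connected_on_replace_edge[OF con \<open>g \<in> S\<close> ends_g] \<open>S - {g} \<subseteq> S'\<close> by blast
  moreover have "(x, y) \<notin> (adj ends (S - {g}))\<^sup>*"
  proof
    assume "(x, y) \<in> (adj ends (S - {g}))\<^sup>*"
    then have "(a, b) \<in> (adj ends (S - {g}))\<^sup>*"
      using adj_rtrancl_sym[OF xa] adj_rtrancl_sym[OF by'] by (meson rtrancl_trans)
    with edge_acyclic_no_bypass[OF ac \<open>g \<in> S\<close> ends_g \<open>a \<noteq> b\<close>] show False by blast
  qed
  then have "edge_acyclic ends S'" unfolding S'_def
    using edge_acyclic_insert[OF edge_acyclic_subset[OF ac] ends_f] by blast
  moreover have "S' \<subseteq> A" using \<open>S \<subseteq> A\<close> f unfolding S'_def by blast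
  ultimately show ?thesis unfolding spanning_tree_def S'_def by blast
qed

section \<open>Prices, minimum spanning trees and revenue\<close>

lemma finite_price_candidates:
  assumes "finite A"
  shows "finite {red_max c R es | es. simple_cycle ends A es \<and> e \<in> set es}"
proof -
  have "{red_max c R es | es. simple_cycle ends A es \<and> e \<in> set es}
        \<subseteq> red_max c R ` {es. set es \<subseteq> A \<and> length es \<le> card A}"
  proof
    fix z assume "z \<in> {red_max c R es | es. simple_cycle ends A es \<and> e \<in> set es}"
    then obtain es where es: "z = red_max c R es" "simple_cycle ends A es" by blast
    then have "set es \<subseteq> A" "distinct es" unfolding simple_cycle_def by blast+
    then have "length es \<le> card A" using card_mono[OF assms] distinct_card by metis
    with es \<open>set es \<subseteq> A\<close> show "z \<in> red_max c R ` {es. set es \<subseteq> A \<and> length es \<le> card A}" by blast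
  qed
  moreover have "finite (red_max c R ` {es. set es \<subseteq> A \<and> length es \<le> card A})"
    using finite_lists_length_le[OF assms] by blast
  ultimately show ?thesis by (rule finite_subset)
qed

lemma price_le_red_max:
  assumes "finite (R \<union> F)" "simple_cycle ends (R \<union> F) es" "e \<in> set es"
  shows "price ends R c F e \<le> red_max c R es"
  unfolding price_def
  by (rule Min_le[OF finite_price_candidates[OF assms(1)]]) (use assms in blast)

lemma price_attained:
  assumes "finite (R \<union> F)" "simple_cycle ends (R \<union> F) es0" "e \<in> set es0"
  obtains es where "simple_cycle ends (R \<union> F) es" "e \<in> set es"
    "price ends R c F e = red_max c R es"
proof -
  have "price ends R c F e \<in> {red_max c R es | es. simple_cycle ends (R \<union> F) es \<and> e \<in> set es}"
    unfolding price_def using assms by (intro Min_in finite_price_candidates) auto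
  with that show thesis by blast
qed

lemma red_max_attained:
  assumes "set es \<inter> R \<noteq> {}"
  obtains g where "g \<in> set es" "g \<in> R" "red_max c R es = c g"
proof -
  have "Max (c ` (set es \<inter> R)) \<in> c ` (set es \<inter> R)" using assms by (intro Max_in) auto
  then obtain g where "g \<in> set es \<inter> R" "Max (c ` (set es \<inter> R)) = c g" by blast
  with assms that[of g] show thesis unfolding red_max_def by simp
qed

lemma red_max_ge: "g \<in> set es \<Longrightarrow> g \<in> R \<Longrightarrow> c g \<le> red_max c R es"
  unfolding red_max_def by (auto intro: Max_ge)

lemma red_max_nonneg:
  assumes "\<forall>e\<in>R. 0 \<le> c e"
  shows "0 \<le> red_max c R es"
proof (cases "set es \<inter> R = {}")
  case False
  then obtain g where "g \<in> R" "red_max c R es = c g" by (rule red_max_attained)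
  with assms show ?thesis by simp
qed (simp add: red_max_def)

lemma price_nonneg:
  assumes "finite (R \<union> F)" "simple_cycle ends (R \<union> F) es" "e \<in> set es" "\<forall>e\<in>R. 0 \<le> c e"
  shows "0 \<le> price ends R c F e"
  using price_attained[OF assms(1-3)] red_max_nonneg[OF assms(4)] by metis

text \<open>If a leader edge \<open>f\<close> is not in the spanning tree \<open>S\<close>, the tree path between its ends contains
  a red edge (\<open>F\<close> is acyclic); exchanging the most expensive one for \<open>f\<close> does not increase the
  weight, since \<open>f\<close> is priced at most at that cost, and gains one leader edge.\<close>
lemma spanning_tree_gain_leader_edge:
  assumes fin: "finite (R \<union> F)" and disj: "R \<inter> F = {}"
    and st: "spanning_tree ends V (R \<union> F) S" and acF: "edge_acyclic ends F"
    and f: "f \<in> F" "f \<notin> S" and ends_f: "ends f = {x, y}" "x \<in> V" "y \<in> V" "x \<noteq> y"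
  obtains S' where "spanning_tree ends V (R \<union> F) S'"
    "sum (follower_weight ends R c F) S' \<le> sum (follower_weight ends R c F) S"
    "card (S' \<inter> F) = Suc (card (S \<inter> F))"
proof -
  define w where "w = follower_weight ends R c F"
  have "S \<subseteq> R \<union> F" using st unfolding spanning_tree_def by blast
  then have "finite S" using fin finite_subset by blast
  obtain es vs where P: "is_path ends S x y es vs"
    using st ends_f unfolding spanning_tree_def connected_on_def reach_def by blast
  have "set es \<subseteq> S" using P unfolding is_path_def by blast
  have cyc: "simple_cycle ends (R \<union> F) (es @ [f])"
    using simple_cycle_of_path[of ends S x y es vs "R \<union> F" f] P ends_f f \<open>S \<subseteq> R \<union> F\<close>
      \<open>set es \<subseteq> S\<close> by (auto simp: insert_commute)
  have "set (es @ [f]) \<inter> R \<noteq> {}"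
  proof
    assume "set (es @ [f]) \<inter> R = {}"
    then have "simple_cycle ends F (es @ [f])"
      using cyc \<open>set es \<subseteq> S\<close> \<open>S \<subseteq> R \<union> F\<close> f by (elim simple_cycle_mono) auto
    with acF show False unfolding edge_acyclic_def by blast
  qed
  then obtain g where g': "g \<in> set (es @ [f])" "g \<in> R" "red_max c R (es @ [f]) = c g"
    by (rule red_max_attained)
  have "f \<notin> R" using disj f by blast
  with g' have g: "g \<in> set es" "g \<in> R" by auto
  have "price ends R c F f \<le> red_max c R (es @ [f])"
    by (rule price_le_red_max[OF fin cyc]) simp
  then have "w f \<le> w g"
    using g' \<open>f \<notin> R\<close> unfolding w_def follower_weight_def by simp
  define S' where "S' = insert f (S - {g})"
  have "spanning_tree ends V (R \<union> F) S'"
    unfolding S'_def using f ends_f P g by (intro spanning_tree_exchange[OF st]) auto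
  moreover have "g \<in> S" using g \<open>set es \<subseteq> S\<close> by blast
  then have "sum w S' = sum w S - w g + w f"
    unfolding S'_def using \<open>finite S\<close> f(2) by (simp add: sum_diff1)
  moreover have "S' \<inter> F = insert f (S \<inter> F)" unfolding S'_def using disj g f by blast
  then have "card (S' \<inter> F) = Suc (card (S \<inter> F))" using \<open>finite S\<close> f(2) by simp
  ultimately show thesis using that \<open>w f \<le> w g\<close> unfolding w_def by force
qed

text \<open>A minimum spanning tree with the most leader edges contains all of them, by the exchange above.\<close>
lemma ex_mst_containing_leader_edges:
  assumes fin: "finite (R \<union> F)" and disj: "R \<inter> F = {}"
    and st: "spanning_tree ends V (R \<union> F) S0" and acF: "edge_acyclic ends F"
    and ends_F: "\<forall>e\<in>F. \<exists>x y. ends e = {x, y} \<and> x \<in> V \<and> y \<in> V \<and> x \<noteq> y"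
  obtains S where "is_mst ends V R c F S" "F \<subseteq> S"
proof -
  define w where "w = follower_weight ends R c F"
  define ST where "ST = {S. spanning_tree ends V (R \<union> F) S}"
  have "ST \<subseteq> Pow (R \<union> F)" unfolding ST_def spanning_tree_def by blast
  then have "finite ST" using fin by (meson finite_Pow_iff finite_subset)
  define M where "M = {S \<in> ST. \<forall>S'\<in>ST. sum w S \<le> sum w S'}"
  have "Min (sum w ` ST) \<in> sum w ` ST" using \<open>finite ST\<close> st unfolding ST_def by (intro Min_in) auto
  then obtain S1 where "S1 \<in> ST" "sum w S1 = Min (sum w ` ST)" by auto
  then have "S1 \<in> M" unfolding M_def using \<open>finite ST\<close> by simp
  then have "M \<noteq> {}" by blast
  moreover have "finite M" using \<open>finite ST\<close> unfolding M_def by simp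
  ultimately have "Max ((\<lambda>S. card (S \<inter> F)) ` M) \<in> (\<lambda>S. card (S \<inter> F)) ` M" by simp
  then obtain S where S: "S \<in> M" "card (S \<inter> F) = Max ((\<lambda>S. card (S \<inter> F)) ` M)" by auto
  with \<open>finite M\<close> have max: "\<forall>S'\<in>M. card (S' \<inter> F) \<le> card (S \<inter> F)" by simp
  have mst: "is_mst ends V R c F S" using S(1) unfolding is_mst_def M_def ST_def w_def by blast
  have "F \<subseteq> S"
  proof
    fix f assume "f \<in> F"
    show "f \<in> S"
    proof (rule ccontr)
      assume "f \<notin> S"
      obtain x y where "ends f = {x, y}" "x \<in> V" "y \<in> V" "x \<noteq> y" using ends_F \<open>f \<in> F\<close> by blast
      then obtain S' where S': "spanning_tree ends V (R \<union> F) S'" "sum w S' \<le> sum w S"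
        "card (S' \<inter> F) = Suc (card (S \<inter> F))"
        using spanning_tree_gain_leader_edge[OF fin disj _ acF \<open>f \<in> F\<close> \<open>f \<notin> S\<close>] S(1)
        unfolding M_def ST_def w_def by blast
      then have "S' \<in> M" using S(1) unfolding M_def ST_def by force
      with max S'(3) show False by force
    qed
  qed
  with mst that show thesis by blast
qed

lemma finite_revenue_candidates:
  assumes "finite (R \<union> F)"
  shows "finite {sum p (S \<inter> F) | S. is_mst ends V R c F S}"
proof -
  have "{sum p (S \<inter> F) | S. is_mst ends V R c F S} \<subseteq> (\<lambda>S. sum p (S \<inter> F)) ` Pow (R \<union> F)"
    unfolding is_mst_def spanning_tree_def by blast
  then show ?thesis using assms by (meson finite_Pow_iff finite_imageI finite_subset)
qed

lemma price_sum_le_revenue: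
  assumes "finite (R \<union> F)" "is_mst ends V R c F S" "F \<subseteq> S"
  shows "sum (price ends R c F) F \<le> revenue ends V R c F"
  unfolding revenue_def
proof (rule Max_ge[OF finite_revenue_candidates[OF assms(1)]])
  show "sum (price ends R c F) F \<in> {sum (price ends R c F) (S \<inter> F) | S. is_mst ends V R c F S}"
    using assms(2,3) by (metis (mono_tags, lifting) inf.absorb2 mem_Collect_eq)
qed

lemma revenue_le_price_sum:
  assumes "finite (R \<union> F)" "is_mst ends V R c F S0" "\<forall>e\<in>F. 0 \<le> price ends R c F e"
  shows "revenue ends V R c F \<le> sum (price ends R c F) F"
  unfolding revenue_def
proof (rule Max.boundedI[OF finite_revenue_candidates[OF assms(1)]])
  show "{sum (price ends R c F) (S \<inter> F) | S. is_mst ends V R c F S} \<noteq> {}" using assms(2) by blast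
  have "finite F" using assms(1) by simp
  then show "x \<le> sum (price ends R c F) F"
    if "x \<in> {sum (price ends R c F) (S \<inter> F) | S. is_mst ends V R c F S}" for x
    using that assms(3) by (auto intro: sum_mono2)
qed

section \<open>Depths and parents in a rooted tree\<close>

locale rooted_tree =
  fixes V :: "'v set" and ET :: "'v set set" and v0 :: 'v
  assumes tree: "is_tree V ET" and root_in_V: "v0 \<in> V"
begin

abbreviation depth :: "'v \<Rightarrow> nat" where "depth \<equiv> tdist ET v0"

lemma finite_V: "finite V"
  using tree unfolding is_tree_def by blast

lemma tree_edge_shape: "e \<in> ET \<Longrightarrow> \<exists>x y. x \<in> V \<and> y \<in> V \<and> x \<noteq> y \<and> e = {x, y}"
  using tree unfolding is_tree_def by blast

lemma tree_edgeD: "{a, b} \<in> ET \<Longrightarrow> a \<in> V \<and> b \<in> V \<and> a \<noteq> b"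
  using tree_edge_shape[of "{a, b}"] by (auto simp: doubleton_eq_iff)

lemma finite_ET: "finite ET"
proof -
  have "ET \<subseteq> Pow V" using tree_edge_shape by blast
  then show ?thesis using finite_V by (meson finite_Pow_iff finite_subset)
qed

lemma tree_spanning: "spanning_tree id V ET ET"
  using tree unfolding is_tree_def by simp

lemma tree_connected: "u \<in> V \<Longrightarrow> v \<in> V \<Longrightarrow> (u, v) \<in> (adj id ET)\<^sup>*"
  using tree_spanning unfolding spanning_tree_def connected_on_def reach_iff_rtrancl by simp

lemma tree_acyclic: "edge_acyclic id ET"
  using tree_spanning unfolding spanning_tree_def by simp

lemma tree_edge_no_bypass: "{a, b} \<in> ET \<Longrightarrow> (a, b) \<notin> (adj id (ET - {{a, b}}))\<^sup>*"
  using edge_acyclic_no_bypass[OF tree_acyclic] tree_edgeD by simp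

lemma ex_shortest_path: "v \<in> V \<Longrightarrow> \<exists>es vs. is_path id ET v0 v es vs \<and> length es = depth v"
proof -
  assume "v \<in> V"
  then have "\<exists>n es vs. is_path id ET v0 v es vs \<and> length es = n"
    using rtrancl_adj_imp_path[OF tree_connected[OF root_in_V]] by blast
  then show ?thesis unfolding tdist_def by (rule LeastI_ex)
qed

lemma depth_le_path_length: "is_path id ET v0 v es vs \<Longrightarrow> depth v \<le> length es"
  unfolding tdist_def by (rule Least_le) blast

lemma depth_root: "depth v0 = 0"
  using depth_le_path_length[of v0 "[]" "[v0]"] unfolding is_path_def by simp

lemma depth_eq_0_iff: "v \<in> V \<Longrightarrow> depth v = 0 \<longleftrightarrow> v = v0"
proof
  assume "v \<in> V" "depth v = 0"
  then obtain es vs where "is_path id ET v0 v es vs" "length es = 0" using ex_shortest_path by metis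
  then show "v = v0" using is_path_endpoints by fastforce
qed (simp add: depth_root)

lemma depth_edge_le: "{a, b} \<in> ET \<Longrightarrow> depth b \<le> Suc (depth a)"
proof -
  assume e: "{a, b} \<in> ET"
  then obtain es vs where P: "is_path id ET v0 a es vs" "length es = depth a"
    using ex_shortest_path tree_edgeD[OF e] by blast
  obtain es' vs' where P': "is_path id ET v0 b es' vs'" "length es' \<le> Suc (length es)"
    using is_path_snoc[OF P(1) e, of b] by auto
  with P(2) depth_le_path_length[OF P'(1)] show ?thesis by simp
qed

lemma ex_neighbour_closer_to_root:
  assumes v: "v \<in> V" and dv: "depth v = Suc n"
  obtains u where "{u, v} \<in> ET" "depth u = n"
proof -
  obtain es vs where P: "is_path id ET v0 v es vs" "length es = depth v"
    using ex_shortest_path[OF v] by blast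
  have n: "n < length es" using P(2) dv by simp
  then have "depth (vs ! n) \<le> n"
    using depth_le_path_length[OF is_path_prefix[OF P(1)]] by fastforce
  have "es ! n \<in> ET" using P(1) n unfolding is_path_def by (meson nth_mem subsetD)
  moreover have "es ! n = {vs ! n, vs ! Suc n}" using P(1) n unfolding is_path_def by simp
  moreover have "vs ! Suc n = v" using is_path_endpoints(2)[OF P(1)] P(2) dv by simp
  ultimately have e: "{vs ! n, v} \<in> ET" by simp
  with depth_edge_le[OF e] \<open>depth (vs ! n) \<le> n\<close> dv have "depth (vs ! n) = n" by simp
  with e that show thesis by blast
qed

text \<open>A shortest path from \<open>v\<close> to the root descends one level per edge and so stays among the
  edges below \<open>v\<close>; the two uniqueness lemmas below use that it therefore avoids a given edge.\<close>
definition down_edges :: "nat \<Rightarrow> 'v set set" where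
  "down_edges n = {{y, z} | y z. {y, z} \<in> ET \<and> Suc (depth z) = depth y \<and> depth y \<le> n}"

lemma down_edgesI: "{y, z} \<in> ET \<Longrightarrow> Suc (depth z) = depth y \<Longrightarrow> depth y \<le> n \<Longrightarrow> {y, z} \<in> down_edges n"
  unfolding down_edges_def by blast

lemma root_path_descending: "v \<in> V \<Longrightarrow> (v, v0) \<in> (adj id (down_edges (depth v)))\<^sup>*"
proof (induction "depth v" arbitrary: v)
  case 0
  then show ?case using depth_eq_0_iff by simp
next
  case (Suc n)
  then obtain u where u: "{u, v} \<in> ET" "depth u = n"
    by (metis ex_neighbour_closer_to_root)
  then have "u \<in> V" using tree_edgeD by blast
  with Suc.hyps(1) u(2) have "(u, v0) \<in> (adj id (down_edges n))\<^sup>*" by blast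
  moreover have "down_edges n \<subseteq> down_edges (depth v)"
    unfolding down_edges_def Suc.hyps(2)[symmetric] by fastforce
  ultimately have "(u, v0) \<in> (adj id (down_edges (depth v)))\<^sup>*" by (rule adj_rtrancl_mono)
  moreover have "{v, u} \<in> down_edges (depth v)"
    using u Suc.hyps(2) by (intro down_edgesI) (simp_all add: insert_commute)
  then have "(v, u) \<in> adj id (down_edges (depth v))" by (rule adjI) simp
  ultimately show ?case by (blast intro: converse_rtrancl_into_rtrancl)
qed

lemma down_edges_subset: "down_edges n \<subseteq> ET"
  unfolding down_edges_def by blast

lemma depth_edge_neq: assumes e: "{a, b} \<in> ET" shows "depth a \<noteq> depth b"
proof
  assume eq: "depth a = depth b"
  have "{a, b} \<notin> down_edges (depth a)"
  proof
    assume "{a, b} \<in> down_edges (depth a)"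
    then obtain y z where "{a, b} = {y, z}" "Suc (depth z) = depth y" unfolding down_edges_def by blast
    with eq show False by (auto simp: doubleton_eq_iff)
  qed
  then have sub: "down_edges (depth a) \<subseteq> ET - {{a, b}}" using down_edges_subset by blast
  have "(a, v0) \<in> (adj id (ET - {{a, b}}))\<^sup>*"
    using adj_rtrancl_mono[OF root_path_descending sub] tree_edgeD[OF e] by blast
  moreover have "(b, v0) \<in> (adj id (down_edges (depth a)))\<^sup>*"
    using root_path_descending[of b] tree_edgeD[OF e] eq by simp
  then have "(b, v0) \<in> (adj id (ET - {{a, b}}))\<^sup>*" by (rule adj_rtrancl_mono[OF _ sub])
  ultimately have "(a, b) \<in> (adj id (ET - {{a, b}}))\<^sup>*" by (meson adj_rtrancl_sym rtrancl_trans)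
  with tree_edge_no_bypass[OF e] show False by blast
qed

lemma lower_neighbour_unique:
  assumes e: "{u, v} \<in> ET" "{u', v} \<in> ET" and d: "Suc (depth u) = depth v" "Suc (depth u') = depth v"
  shows "u = u'"
proof (rule ccontr)
  assume "u \<noteq> u'"
  have "{u, v} \<notin> down_edges (depth u)"
  proof
    assume "{u, v} \<in> down_edges (depth u)"
    then obtain y z where "{u, v} = {y, z}" "Suc (depth z) = depth y" "depth y \<le> depth u"
      unfolding down_edges_def by blast
    with d(1) show False by (auto simp: doubleton_eq_iff)
  qed
  then have sub: "down_edges (depth u) \<subseteq> ET - {{u, v}}" using down_edges_subset by blast
  have u: "(u, v0) \<in> (adj id (ET - {{u, v}}))\<^sup>*"
    using adj_rtrancl_mono[OF root_path_descending sub] tree_edgeD[OF e(1)] by blast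
  have "depth u' = depth u" using d by simp
  then have "(u', v0) \<in> (adj id (down_edges (depth u)))\<^sup>*"
    using root_path_descending[of u'] tree_edgeD[OF e(2)] by simp
  then have "(u', v0) \<in> (adj id (ET - {{u, v}}))\<^sup>*" by (rule adj_rtrancl_mono[OF _ sub])
  then have "(u', u) \<in> (adj id (ET - {{u, v}}))\<^sup>*" using adj_rtrancl_sym[OF u] by (rule rtrancl_trans)
  moreover have "{u', v} \<noteq> {u, v}" using \<open>u \<noteq> u'\<close> by (auto simp: doubleton_eq_iff)
  then have "{v, u'} \<in> ET - {{u, v}}" using e(2) by (simp add: insert_commute)
  then have "(v, u') \<in> adj id (ET - {{u, v}})" by (rule adjI) simp
  ultimately have "(v, u) \<in> (adj id (ET - {{u, v}}))\<^sup>*"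
    by (simp add: converse_rtrancl_into_rtrancl)
  with tree_edge_no_bypass[OF e(1)] adj_rtrancl_sym show False by metis
qed

lemma parent_edge:
  assumes v: "v \<in> V" "v \<noteq> v0"
  shows "{parent ET v0 v, v} \<in> ET" "Suc (depth (parent ET v0 v)) = depth v"
proof -
  obtain n where n: "depth v = Suc n" using v depth_eq_0_iff not0_implies_Suc by blast
  then obtain u where u: "{u, v} \<in> ET" "depth u = n" using ex_neighbour_closer_to_root[OF v(1)] by blast
  have "\<exists>!u. {u, v} \<in> ET \<and> Suc (depth u) = depth v"
  proof (rule ex1I[of _ u])
    show "{u, v} \<in> ET \<and> Suc (depth u) = depth v" using u n by simp
    show "y = u" if "{y, v} \<in> ET \<and> Suc (depth y) = depth v" for y
      using that u n lower_neighbour_unique[of y v u] by simp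
  qed
  then have "{parent ET v0 v, v} \<in> ET \<and> Suc (depth (parent ET v0 v)) = depth v"
    unfolding parent_def by (rule theI')
  then show "{parent ET v0 v, v} \<in> ET" "Suc (depth (parent ET v0 v)) = depth v" by blast+
qed

lemma parent_eqI:
  assumes "{u, v} \<in> ET" "Suc (depth u) = depth v"
  shows "parent ET v0 v = u"
proof -
  have "v \<in> V" "v \<noteq> v0" using tree_edgeD[OF assms(1)] assms(2) depth_root by auto
  with parent_edge lower_neighbour_unique[of "parent ET v0 v" v u] assms show ?thesis by blast
qed

lemma tree_edge_cases:
  assumes e: "{a, b} \<in> ET"
  shows "(a = parent ET v0 b \<and> Suc (depth a) = depth b) \<or> (b = parent ET v0 a \<and> Suc (depth b) = depth a)"
proof -
  have e': "{b, a} \<in> ET" using e by (simp add: insert_commute)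
  have "Suc (depth a) = depth b \<or> Suc (depth b) = depth a"
    using depth_edge_le[OF e] depth_edge_le[OF e'] depth_edge_neq[OF e] by linarith
  then show ?thesis using parent_eqI[OF e] parent_eqI[OF e'] by auto
qed

end

section \<open>Contracting the components of \<open>T - E\<^sub>i\<close>\<close>

locale tree_level = rooted_tree +
  fixes i :: nat
  assumes level_pos: "1 \<le> i"
begin

abbreviation par where "par \<equiv> parent ET v0"
abbreviation Vi where "Vi \<equiv> level V ET v0 i"
abbreviation Ei where "Ei \<equiv> level_edges V ET v0 i"
abbreviation star where "star \<equiv> star_vertices V ET v0 i"

text \<open>The vertex of \<open>T\<^sub>i\<close> lying in the same component of \<open>T - E\<^sub>i\<close> as \<open>x\<close>: its ancestor at depth \<open>i\<close>,
  or the root if \<open>x\<close> is shallower.\<close>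
definition rep where
  "rep x = (if depth x < i then v0 else (par ^^ (depth x - i)) x)"

lemma level_iff: "v \<in> Vi \<longleftrightarrow> v \<in> V \<and> depth v = i"
  unfolding level_def by simp

lemma star_vertices_iff: "j \<in> star \<longleftrightarrow> j = v0 \<or> (j \<in> V \<and> depth j = i)"
  by (simp add: star_vertices_def level_iff)

lemma star_vertices_subset: "star \<subseteq> V"
  using root_in_V by (auto simp: star_vertices_iff)

lemma depth_pos_not_root: "v \<in> V \<Longrightarrow> depth v \<ge> 1 \<Longrightarrow> v \<noteq> v0"
  using depth_root by auto

lemma level_edge_of: "w \<in> Vi \<Longrightarrow> {par w, w} \<in> Ei"
  unfolding level_edges_def by (rule imageI)

lemma level_parent_edge: "w \<in> Vi \<Longrightarrow> {par w, w} \<in> ET"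
  using level_iff depth_pos_not_root level_pos parent_edge by blast

lemma rep_star_vertex: "j \<in> star \<Longrightarrow> rep j = j"
  unfolding rep_def using star_vertices_iff depth_root level_pos by auto

lemma level_edgesE:
  assumes "e \<in> Ei"
  obtains v where "v \<in> V" "depth v = i" "e = {par v, v}"
proof -
  obtain v where "v \<in> Vi" "e = {par v, v}" using assms unfolding level_edges_def by blast
  with that[of v] show thesis by (simp add: level_iff)
qed

lemma parent_edge_in_level_edges:
  assumes w: "w \<in> V" "w \<noteq> v0" and e: "{par w, w} \<in> Ei"
  shows "depth w = i"
proof -
  obtain v where v: "v \<in> V" "depth v = i" "{par w, w} = {par v, v}" using e by (rule level_edgesE)
  have "Suc (depth (par v)) = depth v" using parent_edge v depth_pos_not_root level_pos by simp
  moreover have "Suc (depth (par w)) = depth w" using parent_edge[OF w] by simp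
  moreover have "(par w = par v \<and> w = v) \<or> (par w = v \<and> w = par v)"
    using v(3) by (simp add: doubleton_eq_iff)
  ultimately show ?thesis using v(2) by auto
qed

lemma rep_parent:
  assumes w: "w \<in> V" "w \<noteq> v0" and "depth w \<noteq> i"
  shows "rep (par w) = rep w"
proof -
  have dp: "Suc (depth (par w)) = depth w" using parent_edge[OF w] by simp
  show ?thesis
  proof (cases "depth w < i")
    case False
    then have "depth w - i = Suc (depth (par w) - i)" using dp \<open>depth w \<noteq> i\<close> by simp
    then have "(par ^^ (depth w - i)) w = (par ^^ (depth (par w) - i)) (par w)"
      by (simp only: funpow_Suc_right comp_apply)
    then show ?thesis unfolding rep_def using dp False \<open>depth w \<noteq> i\<close> by simp
  qed (use dp in \<open>simp add: rep_def\<close>)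
qed

lemma rep_eq_if_adj:
  assumes "(y, z) \<in> adj id (ET - Ei)"
  shows "rep y = rep z"
proof -
  have e: "{y, z} \<in> ET" "{y, z} \<notin> Ei" using assms unfolding adj_def by auto
  have rep_child: "rep (par w) = rep w"
    if "{par w, w} \<in> ET" "{par w, w} \<notin> Ei" "Suc (depth (par w)) = depth w" for w
  proof -
    have "w \<in> V" "w \<noteq> v0" using that(1,3) tree_edgeD depth_root by auto
    moreover have "depth w \<noteq> i" using that(2) \<open>w \<in> V\<close> level_edge_of level_iff by blast
    ultimately show ?thesis by (rule rep_parent)
  qed
  from tree_edge_cases[OF e(1)] show ?thesis
  proof
    assume "y = par z \<and> Suc (depth y) = depth z"
    then show ?thesis using rep_child[of z] e by auto
  next
    assume h: "z = par y \<and> Suc (depth z) = depth y"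
    then have "{par y, y} = {y, z}" by auto
    then show ?thesis using rep_child[of y] e h by metis
  qed
qed

lemma rep_eq_if_rtrancl_adj: "(y, z) \<in> (adj id (ET - Ei))\<^sup>* \<Longrightarrow> rep y = rep z"
  by (induction rule: rtrancl_induct) (simp_all add: rep_eq_if_adj)

lemma rtrancl_adj_ancestor:
  "x \<in> V \<Longrightarrow> depth x = i + n \<Longrightarrow> (x, (par ^^ n) x) \<in> (adj id (ET - Ei))\<^sup>*"
proof (induction n arbitrary: x)
  case (Suc n)
  have "x \<noteq> v0" using Suc.prems depth_pos_not_root by simp
  then have p: "par x \<in> V" "Suc (depth (par x)) = depth x" "{par x, x} \<in> ET"
    using parent_edge[OF Suc.prems(1)] tree_edgeD by auto
  have "{par x, x} \<notin> Ei" using parent_edge_in_level_edges[OF Suc.prems(1) \<open>x \<noteq> v0\<close>] Suc.prems(2)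
    by auto
  then have "(x, par x) \<in> adj id (ET - Ei)" using p(3) by (intro adjI[of "{par x, x}"]) auto
  moreover have "(par x, (par ^^ n) (par x)) \<in> (adj id (ET - Ei))\<^sup>*"
    using Suc.IH[OF p(1)] p(2) Suc.prems(2) by (simp add: id_def)
  ultimately show ?case by (simp add: funpow_swap1 id_def converse_rtrancl_into_rtrancl)
qed simp

lemma rtrancl_adj_rep: assumes x: "x \<in> V" shows "(x, rep x) \<in> (adj id (ET - Ei))\<^sup>*"
proof (cases "depth x < i")
  case True
  have "down_edges (depth x) \<subseteq> ET - Ei"
  proof
    fix e assume e: "e \<in> down_edges (depth x)"
    then obtain y z where "e = {y, z}" "Suc (depth z) = depth y" "depth y \<le> depth x"
      unfolding down_edges_def by blast
    have "e \<notin> Ei"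
    proof
      assume "e \<in> Ei"
      then obtain v where "depth v = i" "v \<in> e" by (metis level_edgesE insertCI)
      with \<open>e = {y, z}\<close> \<open>Suc (depth z) = depth y\<close> \<open>depth y \<le> depth x\<close> True show False by auto
    qed
    then show "e \<in> ET - Ei" using e down_edges_subset by blast
  qed
  then show ?thesis
    using adj_rtrancl_mono[OF root_path_descending[OF x]] True unfolding rep_def by simp
next
  case False
  with rtrancl_adj_ancestor[OF x, of "depth x - i"] show ?thesis unfolding rep_def by simp
qed

lemma comp_eq:
  assumes "j \<in> star"
  shows "comp V ET v0 i j = {x \<in> V. rep x = j}"
proof -
  have "(j, x) \<in> (adj id (ET - Ei))\<^sup>* \<longleftrightarrow> rep x = j" if "x \<in> V" for x
  proof
    assume "(j, x) \<in> (adj id (ET - Ei))\<^sup>*"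
    then show "rep x = j" using rep_eq_if_rtrancl_adj rep_star_vertex[OF assms] by metis
  next
    assume "rep x = j"
    then show "(j, x) \<in> (adj id (ET - Ei))\<^sup>*" using adj_rtrancl_sym[OF rtrancl_adj_rep[OF that]] by simp
  qed
  then show ?thesis unfolding comp_def reach_iff_rtrancl by blast
qed

lemma aux_pairE:
  assumes "p \<in> aux_pairs V ET v0 i"
  obtains j q where "p = {j, q}" "j \<in> star" "q \<in> star" "j \<noteq> q"
  using assms unfolding aux_pairs_def by blast

lemma candidateE:
  assumes p: "p \<in> aux_pairs V ET v0 i" and e: "e \<in> cand V ET v0 i p"
  obtains x y where "e = {x, y}" "x \<in> V" "y \<in> V" "x \<noteq> y" "p = {rep x, rep y}" "e \<notin> ET"
proof -
  obtain j' q' where p1: "p = {j', q'}" "j' \<in> star" "q' \<in> star" "j' \<noteq> q'" using p by (rule aux_pairE)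
  obtain x y j q where c: "e = {x, y}" "p = {j, q}" "x \<in> comp V ET v0 i j" "y \<in> comp V ET v0 i q"
    "{x, y} \<notin> ET"
    using e unfolding cand_def by blast
  have "(j' = j \<and> q' = q) \<or> (j' = q \<and> q' = j)" using c(2) p1(1) by (simp add: doubleton_eq_iff)
  then have "j \<in> star" "q \<in> star" "j \<noteq> q" using p1 by auto
  then have "x \<in> V" "rep x = j" "y \<in> V" "rep y = q" using c(3,4) comp_eq by auto
  with c \<open>j \<noteq> q\<close> that show thesis by blast
qed

end

locale level_leader = tree_level +
  fixes hatP :: "'a set set" and ech :: "'a set \<Rightarrow> 'a set" and c :: "'a set \<Rightarrow> real"
  assumes hatP_sub: "hatP \<subseteq> aux_pairs V ET v0 i"
    and ech_cand: "\<forall>p\<in>aux_pairs V ET v0 i. ech p \<in> cand V ET v0 i p"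
    and aux_acyclic: "edge_acyclic (aux_ends v0) (Inr ` hatP)"
    and cost_nonneg: "\<forall>e\<in>ET. 0 \<le> c e"
begin

abbreviation F where "F \<equiv> ech ` hatP"
abbreviation star_ends where "star_ends \<equiv> aux_ends v0"
abbreviation red_star :: "('a + 'a set) set" where "red_star \<equiv> Inl ` Vi"
abbreviation hatF :: "('a + 'a set) set" where "hatF \<equiv> Inr ` hatP"
abbreviation star_cost where "star_cost \<equiv> aux_cost ET v0 c"

lemma star_ends_simps [simp]: "star_ends (Inl w) = {v0, w}" "star_ends (Inr p) = p"
  unfolding aux_ends_def by simp_all

lemma star_cost_Inl [simp]: "star_cost (Inl w) = c {par w, w}"
  unfolding aux_cost_def by simp

lemma level_vertex_not_root: "w \<in> Vi \<Longrightarrow> w \<noteq> v0"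
  using level_iff depth_pos_not_root level_pos by simp

lemma leader_pairE:
  assumes "p \<in> hatP"
  obtains j q where "p = {j, q}" "j \<in> star" "q \<in> star" "j \<noteq> q"
proof -
  have "p \<in> aux_pairs V ET v0 i" using assms hatP_sub by blast
  then show thesis using that by (rule aux_pairE)
qed

lemma leader_edgeE:
  assumes "p \<in> hatP"
  obtains x y where "ech p = {x, y}" "x \<in> V" "y \<in> V" "x \<noteq> y" "p = {rep x, rep y}" "ech p \<notin> ET"
proof -
  have "p \<in> aux_pairs V ET v0 i" using assms hatP_sub by blast
  moreover from this have "ech p \<in> cand V ET v0 i p" using ech_cand by blast
  ultimately show thesis using that by (rule candidateE)
qed

lemma rep_image_leader_edge:
  assumes "p \<in> hatP" shows "rep ` ech p = p"
proof -
  obtain x y where "ech p = {x, y}" "p = {rep x, rep y}" using assms by (rule leader_edgeE)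
  then show ?thesis by simp
qed

lemma inj_on_ech: "inj_on ech hatP"
proof (rule inj_onI)
  fix p q assume "p \<in> hatP" "q \<in> hatP" "ech p = ech q"
  then show "p = q" using rep_image_leader_edge by metis
qed

lemma leader_edges_disjoint: "ET \<inter> F = {}"
proof -
  have "ech p \<notin> ET" if "p \<in> hatP" for p using that by (rule leader_edgeE)
  then show ?thesis by blast
qed

lemma finite_hatP: "finite hatP"
proof -
  have "aux_pairs V ET v0 i \<subseteq> Pow V" unfolding aux_pairs_def using star_vertices_subset by blast
  then show ?thesis using hatP_sub finite_V by (meson finite_Pow_iff finite_subset)
qed

lemma finite_orig: "finite (ET \<union> F)"
  using finite_ET finite_hatP by simp

lemma finite_aux: "finite (red_star \<union> hatF)"
proof -
  have "Vi \<subseteq> V" unfolding level_def by blast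
  then show ?thesis using finite_V finite_hatP finite_subset by auto
qed

text \<open>The auxiliary edges standing for a set \<open>B\<close> of original edges: an edge of \<open>E\<^sub>i\<close> becomes its red
  star edge, a leader edge \<open>ech p\<close> becomes \<open>Inr p\<close>; the other tree edges are contracted by \<open>rep\<close>.\<close>
definition aux_image :: "'a set set \<Rightarrow> ('a + 'a set) set" where
  "aux_image B = Inl ` {w \<in> Vi. {par w, w} \<in> B} \<union> Inr ` {p \<in> hatP. ech p \<in> B}"

lemma rep_tree_edge_aux_image:
  assumes "{y, z} \<in> B" "{y, z} \<in> ET" "y = par z" "Suc (depth y) = depth z"
  shows "(rep y, rep z) \<in> (adj star_ends (aux_image B))\<^sup>*"
proof (cases "depth z = i")
  case True
  have "z \<in> V" using assms(2) tree_edgeD by blast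
  with True have "z \<in> Vi" using level_iff by simp
  then have "rep z = z" using rep_star_vertex unfolding star_vertices_def by simp
  moreover have "rep y = v0" unfolding rep_def using assms(4) True by simp
  moreover have "Inl z \<in> aux_image B" unfolding aux_image_def using \<open>z \<in> Vi\<close> assms(1,3) by blast
  then have "(v0, z) \<in> adj star_ends (aux_image B)" by (rule adjI) simp
  ultimately show ?thesis by simp
next
  case False
  have "z \<in> V" "z \<noteq> v0" using assms(2,4) tree_edgeD depth_root by auto
  with False assms(3) show ?thesis using rep_parent by simp
qed

lemma rep_adj_aux_image:
  assumes B: "B \<subseteq> ET \<union> F" and ab: "(a, b) \<in> adj id B"
  shows "(rep a, rep b) \<in> (adj star_ends (aux_image B))\<^sup>*"
proof -
  obtain e where e: "e \<in> B" "e = {a, b}" using ab unfolding adj_def by auto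
  show ?thesis
  proof (cases "e \<in> ET")
    case True
    with e have "{a, b} \<in> B" "{a, b} \<in> ET" "{b, a} \<in> B" "{b, a} \<in> ET" by (simp_all add: insert_commute)
    from tree_edge_cases[OF \<open>{a, b} \<in> ET\<close>] show ?thesis
    proof
      assume "a = par b \<and> Suc (depth a) = depth b"
      with \<open>{a, b} \<in> B\<close> \<open>{a, b} \<in> ET\<close> show ?thesis by (blast intro: rep_tree_edge_aux_image)
    next
      assume "b = par a \<and> Suc (depth b) = depth a"
      with \<open>{b, a} \<in> B\<close> \<open>{b, a} \<in> ET\<close> have "(rep b, rep a) \<in> (adj star_ends (aux_image B))\<^sup>*"
        by (blast intro: rep_tree_edge_aux_image)
      then show ?thesis by (rule adj_rtrancl_sym)
    qed
  next
    case False
    with e B obtain p where p: "p \<in> hatP" "e = ech p" by blast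
    then have "p = rep ` {a, b}" using rep_image_leader_edge[OF p(1)] e(2) by simp
    then have "star_ends (Inr p) = {rep a, rep b}" by simp
    moreover have "Inr p \<in> aux_image B" unfolding aux_image_def using p e(1) by blast
    ultimately have "(rep a, rep b) \<in> adj star_ends (aux_image B)" by (intro adjI[of "Inr p"])
    then show ?thesis by blast
  qed
qed

lemma rep_rtrancl_adj_aux_image:
  assumes "B \<subseteq> ET \<union> F" "(a, b) \<in> (adj id B)\<^sup>*"
  shows "(rep a, rep b) \<in> (adj star_ends (aux_image B))\<^sup>*"
  using assms(2)
proof (induction rule: rtrancl_induct)
  case (step y z)
  then show ?case using rep_adj_aux_image[OF assms(1)] by (meson rtrancl_trans)
qed simp

lemma aux_cycle_of_cycle:
  assumes p: "p \<in> hatP" and C: "simple_cycle id (ET \<union> F) C" and f: "ech p \<in> set C"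
  obtains C' where "simple_cycle star_ends (insert (Inr p) (aux_image (set C - {ech p}))) C'" "Inr p \<in> set C'"
proof -
  define B where "B = set C - {ech p}"
  have "B \<subseteq> ET \<union> F" using C unfolding B_def simple_cycle_def by blast
  obtain a b where ab: "ech p = {a, b}" "(a, b) \<in> (adj id B)\<^sup>*"
    using simple_cycle_bypass[OF C f] unfolding B_def by auto
  have "(rep b, rep a) \<in> (adj star_ends (aux_image B))\<^sup>*"
    using adj_rtrancl_sym[OF rep_rtrancl_adj_aux_image[OF \<open>B \<subseteq> ET \<union> F\<close> ab(2)]] .
  moreover have "p = {rep a, rep b}" using rep_image_leader_edge[OF p] ab(1) by simp
  moreover have "rep a \<noteq> rep b"
  proof
    assume "rep a = rep b"
    moreover obtain j q where "p = {j, q}" "j \<noteq> q" using p by (rule leader_pairE)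
    ultimately show False using \<open>p = {rep a, rep b}\<close> by (auto simp: doubleton_eq_iff)
  qed
  moreover have "Inr p \<notin> aux_image B" unfolding aux_image_def B_def by blast
  ultimately have "\<exists>C'. simple_cycle star_ends (insert (Inr p) (aux_image B)) C' \<and> Inr p \<in> set C'"
    by (intro simple_cycle_close) auto
  with that show thesis unfolding B_def by blast
qed

lemma leader_edges_acyclic: "edge_acyclic id F"
  unfolding edge_acyclic_def
proof
  assume "\<exists>C. simple_cycle id F C"
  then obtain C where C: "simple_cycle id F C" by blast
  then have "set C \<subseteq> F" "set C \<noteq> {}" unfolding simple_cycle_def by auto
  then obtain f where "f \<in> set C" "f \<in> F" by (meson ex_in_conv subsetD)
  then obtain p where p: "p \<in> hatP" "ech p \<in> set C" by blast
  have "simple_cycle id (ET \<union> F) C" using C \<open>set C \<subseteq> F\<close> by (auto intro: simple_cycle_mono)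
  then obtain C' where C': "simple_cycle star_ends (insert (Inr p) (aux_image (set C - {ech p}))) C'"
    by (rule aux_cycle_of_cycle[OF p(1) _ p(2)])
  have "{par w, w} \<notin> set C" if "w \<in> Vi" for w
    using \<open>set C \<subseteq> F\<close> level_parent_edge[OF that] leader_edges_disjoint by blast
  then have "insert (Inr p) (aux_image (set C - {ech p})) \<subseteq> hatF"
    unfolding aux_image_def using p(1) by blast
  moreover have "set C' \<subseteq> insert (Inr p) (aux_image (set C - {ech p}))"
    using C' unfolding simple_cycle_def by blast
  ultimately have "simple_cycle star_ends hatF C'" using C' by (blast intro: simple_cycle_mono)
  with aux_acyclic show False unfolding edge_acyclic_def by blast
qed

lemma leader_edge_on_cycle:
  assumes "p \<in> hatP"
  obtains C where "simple_cycle id (ET \<union> F) C" "ech p \<in> set C"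
proof -
  obtain x y where xy: "ech p = {x, y}" "x \<in> V" "y \<in> V" "x \<noteq> y" "ech p \<notin> ET"
    using assms by (rule leader_edgeE)
  then have "\<exists>C. simple_cycle id (ET \<union> F) C \<and> ech p \<in> set C"
    using tree_connected[of y x] assms by (intro simple_cycle_close) auto
  with that show thesis by blast
qed

lemma star_connected: "s \<in> star \<Longrightarrow> t \<in> star \<Longrightarrow> (s, t) \<in> (adj star_ends red_star)\<^sup>*"
proof -
  have to_root: "(s, v0) \<in> (adj star_ends red_star)\<^sup>*" if "s \<in> star" for s
  proof (cases "s = v0")
    case False
    with that have "s \<in> Vi" using star_vertices_iff level_iff by blast
    moreover have "star_ends (Inl s) = {s, v0}" by auto
    ultimately have "(s, v0) \<in> adj star_ends red_star" by (intro adjI[of "Inl s"]) auto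
    then show ?thesis by blast
  qed simp
  assume "s \<in> star" "t \<in> star"
  with to_root[of s] adj_rtrancl_sym[OF to_root[of t]] show ?thesis by (meson rtrancl_trans)
qed

lemma aux_leader_edge_on_cycle:
  assumes "p \<in> hatP"
  obtains C where "simple_cycle star_ends (red_star \<union> hatF) C" "Inr p \<in> set C"
proof -
  obtain j q where "p = {j, q}" "j \<in> star" "q \<in> star" "j \<noteq> q" using assms by (rule leader_pairE)
  then have "\<exists>C. simple_cycle star_ends (red_star \<union> hatF) C \<and> Inr p \<in> set C"
    using star_connected[of q j] assms by (intro simple_cycle_close) auto
  with that show thesis by blast
qed

lemma aux_price_nonneg:
  assumes "p \<in> hatP" shows "0 \<le> price star_ends red_star star_cost hatF (Inr p)"
proof -
  obtain C where "simple_cycle star_ends (red_star \<union> hatF) C" "Inr p \<in> set C"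
    using assms by (rule aux_leader_edge_on_cycle)
  moreover have "\<forall>e\<in>red_star. 0 \<le> star_cost e" using level_parent_edge cost_nonneg by auto
  ultimately show ?thesis by (rule price_nonneg[OF finite_aux])
qed

lemma aux_price_le_price:
  assumes p: "p \<in> hatP"
  shows "price star_ends red_star star_cost hatF (Inr p) \<le> price id ET c F (ech p)"
proof -
  obtain C0 where "simple_cycle id (ET \<union> F) C0" "ech p \<in> set C0" using p by (rule leader_edge_on_cycle)
  then obtain C where C: "simple_cycle id (ET \<union> F) C" "ech p \<in> set C"
    and price_eq: "price id ET c F (ech p) = red_max c ET C"
    using price_attained[OF finite_orig] by metis
  obtain C' where C': "simple_cycle star_ends (insert (Inr p) (aux_image (set C - {ech p}))) C'" "Inr p \<in> set C'"
    using aux_cycle_of_cycle[OF p C] by blast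
  have sC': "set C' \<subseteq> insert (Inr p) (aux_image (set C - {ech p}))"
    using C'(1) unfolding simple_cycle_def by blast
  also have "\<dots> \<subseteq> red_star \<union> hatF" unfolding aux_image_def using p by blast
  finally have "simple_cycle star_ends (red_star \<union> hatF) C'" using C'(1) by (rule simple_cycle_mono[rotated])
  then have "price star_ends red_star star_cost hatF (Inr p) \<le> red_max star_cost red_star C'"
    using price_le_red_max[OF finite_aux] C'(2) by blast
  also have "red_max star_cost red_star C' \<le> red_max c ET C"
  proof (cases "set C' \<inter> red_star = {}")
    case True
    then show ?thesis using red_max_nonneg[OF cost_nonneg] unfolding red_max_def by simp
  next
    case False
    then obtain e where e: "e \<in> set C'" "e \<in> red_star" "red_max star_cost red_star C' = star_cost e"
      by (rule red_max_attained)
    then obtain w where w: "e = Inl w" "w \<in> Vi" by blast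
    then have "{par w, w} \<in> set C" "{par w, w} \<in> ET"
      using e(1) sC' level_parent_edge[OF w(2)] unfolding aux_image_def by auto
    then show ?thesis using red_max_ge e(3) w(1) by simp
  qed
  finally show ?thesis using price_eq by simp
qed

lemma aux_star_spanning_tree: "spanning_tree star_ends star (red_star \<union> hatF) red_star"
proof -
  have "edge_acyclic star_ends red_star"
    unfolding edge_acyclic_def
  proof
    assume "\<exists>C. simple_cycle star_ends red_star C"
    then obtain C where C: "simple_cycle star_ends red_star C" by blast
    then have "set C \<subseteq> red_star" "set C \<noteq> {}" unfolding simple_cycle_def by auto
    then obtain e where "e \<in> set C" "e \<in> red_star" by (meson ex_in_conv subsetD)
    then obtain w where w: "w \<in> Vi" "Inl w \<in> set C" by blast
    then obtain a b where ab: "{v0, w} = {a, b}" "(a, b) \<in> (adj star_ends (set C - {Inl w}))\<^sup>*"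
      using simple_cycle_bypass[OF C w(2)] by auto
    have "w \<noteq> v0" using w(1) by (rule level_vertex_not_root)
    have iso: "\<forall>e\<in>set C - {Inl w}. w \<notin> star_ends e" using \<open>set C \<subseteq> red_star\<close> \<open>w \<noteq> v0\<close> by auto
    have "(a = v0 \<and> b = w) \<or> (a = w \<and> b = v0)" using ab(1) by (auto simp: doubleton_eq_iff)
    then show False
    proof
      assume "a = v0 \<and> b = w"
      then have "(v0, w) \<in> (adj star_ends (set C - {Inl w}))\<^sup>*" using ab(2) by simp
      then show False using rtrancl_adj_isolated[OF _ iso] \<open>w \<noteq> v0\<close> by blast
    next
      assume "a = w \<and> b = v0"
      then have "(v0, w) \<in> (adj star_ends (set C - {Inl w}))\<^sup>*" using adj_rtrancl_sym[OF ab(2)] by simp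
      then show False using rtrancl_adj_isolated[OF _ iso] \<open>w \<noteq> v0\<close> by blast
    qed
  qed
  then show ?thesis
    unfolding spanning_tree_def connected_on_def reach_iff_rtrancl using star_connected by blast
qed

lemma price_sum_le_revenue_orig: "sum (price id ET c F) F \<le> revenue id V ET c F"
proof -
  have ends: "\<forall>e\<in>F. \<exists>x y. id e = {x, y} \<and> x \<in> V \<and> y \<in> V \<and> x \<noteq> y"
  proof
    fix e assume e: "e \<in> F"
    obtain p where p: "p \<in> hatP" "e = ech p" using e by blast
    from p(1) obtain x y where "ech p = {x, y}" "x \<in> V" "y \<in> V" "x \<noteq> y"
      by (rule leader_edgeE)
    with p(2) show "\<exists>x y. id e = {x, y} \<and> x \<in> V \<and> y \<in> V \<and> x \<noteq> y" by auto
  qed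
  have "spanning_tree id V (ET \<union> F) ET" using tree_spanning unfolding spanning_tree_def by blast
  then obtain S where "is_mst id V ET c F S" "F \<subseteq> S"
    by (rule ex_mst_containing_leader_edges[OF finite_orig leader_edges_disjoint _ leader_edges_acyclic ends])
  then show ?thesis by (rule price_sum_le_revenue[OF finite_orig])
qed

lemma revenue_aux_le_price_sum: "revenue star_ends star red_star star_cost hatF \<le> sum (price star_ends red_star star_cost hatF) hatF"
proof -
  have ends: "\<forall>e\<in>hatF. \<exists>x y. star_ends e = {x, y} \<and> x \<in> star \<and> y \<in> star \<and> x \<noteq> y"
  proof
    fix e assume e: "e \<in> hatF"
    obtain p where p: "p \<in> hatP" "e = Inr p" using e by blast
    from p(1) obtain j q where "p = {j, q}" "j \<in> star" "q \<in> star" "j \<noteq> q"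
      by (rule leader_pairE)
    with p(2) show "\<exists>x y. star_ends e = {x, y} \<and> x \<in> star \<and> y \<in> star \<and> x \<noteq> y" by auto
  qed
  have "red_star \<inter> hatF = {}" by blast
  then obtain S where "is_mst star_ends star red_star star_cost hatF S"
    by (rule ex_mst_containing_leader_edges[OF finite_aux _ aux_star_spanning_tree aux_acyclic ends])
  moreover have "\<forall>e\<in>hatF. 0 \<le> price star_ends red_star star_cost hatF e" using aux_price_nonneg by blast
  ultimately show ?thesis by (rule revenue_le_price_sum[OF finite_aux])
qed

lemma price_sum_aux_le_orig: "sum (price star_ends red_star star_cost hatF) hatF \<le> sum (price id ET c F) F"
proof -
  have "sum (price star_ends red_star star_cost hatF) hatF = (\<Sum>p\<in>hatP. price star_ends red_star star_cost hatF (Inr p))"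
    by (simp add: sum.reindex)
  also have "\<dots> \<le> (\<Sum>p\<in>hatP. price id ET c F (ech p))"
    by (rule sum_mono) (rule aux_price_le_price)
  also have "\<dots> = sum (price id ET c F) F"
    by (simp add: sum.reindex[OF inj_on_ech])
  finally show ?thesis .
qed

end

theorem lemma7:
  fixes V :: "'v set" and ET :: "'v set set" and c :: "'v set \<Rightarrow> real"
    and \<gamma> :: "'v set \<Rightarrow> real" and \<Delta> :: real and v0 :: 'v and i :: nat
    and ech :: "'v set \<Rightarrow> 'v set" and hatP :: "'v set set"
  assumes tree: "is_tree V ET"
    and c_nonneg: "\<forall>e\<in>ET. 0 \<le> c e"
    and gamma_nonneg: "\<forall>x\<in>V. \<forall>y\<in>V. x \<noteq> y \<and> {x, y} \<notin> ET \<longrightarrow> 0 \<le> \<gamma> {x, y}"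
    and center: "is_center V ET v0"
    and i_ge: "1 \<le> i" and i_le: "i \<le> height V ET v0"
    and ech: "\<forall>p\<in>aux_pairs V ET v0 i. ech p \<in> cand V ET v0 i p \<and>
                 (\<forall>e\<in>cand V ET v0 i p. \<gamma> (ech p) \<le> \<gamma> e)"
    and hatP_sub: "hatP \<subseteq> aux_pairs V ET v0 i"
    and budget: "(\<Sum>p\<in>hatP. \<gamma> (ech p)) \<le> \<Delta>"
    and stars: "forest_of_stars (aux_ends v0) (star_vertices V ET v0 i) (Inr ` hatP)"
  shows "revenue id V ET c (ech ` hatP) \<ge>
         revenue (aux_ends v0) (star_vertices V ET v0 i) (Inl ` level V ET v0 i)
                 (aux_cost ET v0 c) (Inr ` hatP)"
proof -
  \<comment> \<open>The hypotheses on \<open>\<gamma>\<close>, the budget and the height bound only make \<open>F\<^sub>i\<close> a feasible choice;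
    the revenue comparison needs of the centre only \<open>v0 \<in> V\<close> and of the star forest only acyclicity.\<close>
  have "v0 \<in> V" using center unfolding is_center_def by blast
  moreover have "edge_acyclic (aux_ends v0) (Inr ` hatP)"
    using stars unfolding forest_of_stars_def by blast
  ultimately interpret level_leader V ET v0 i hatP ech c
    using tree i_ge hatP_sub ech c_nonneg by unfold_locales blast+
  from revenue_aux_le_price_sum price_sum_aux_le_orig price_sum_le_revenue_orig
  show ?thesis by linarith
qed

end
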